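(* For every integer $n\ge 3$, the number of spanning trees of $M_n$ is $$\tau(M_n)=\frac{n}{2}\,(p^{n}+q^{n}+2).$$
   Context: For an integer $n\ge 3$, the Möbius polyomino network $M_n$ is the graph with vertex set $\{1,\dots,n\}\cup\{1',\dots,n'\}$ whose edges are $\{i,i+1\}$ and $\{i',(i+1)'\}$ for $1\le i\le n-1$, $\{i,i'\}$ for $1\le i\le n$, and the two edges $\{1,n'\}$ and $\{1',n\}$. $p=2+\sqrt3$, $q=2-\sqrt3$. $\tau(G)$ denotes the number of spanning trees of $G$. *)

theory Defs
  imports Complex_Main
begin

definition adj :: "'a set set \<Rightarrow> 'a \<Rightarrow> 'a \<Rightarrow> bool" where
  "adj E u v \<longleftrightarrow> {u, v} \<in> E"

definition graph_connected :: "'a set \<Rightarrow> 'a set set \<Rightarrow> bool" where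
  "graph_connected V E \<longleftrightarrow> (\<forall>u\<in>V. \<forall>v\<in>V. (adj E)\<^sup>*\<^sup>* u v)"

definition is_cycle :: "'a set set \<Rightarrow> 'a list \<Rightarrow> bool" where
  "is_cycle E cs \<longleftrightarrow> length cs \<ge> 3 \<and> distinct cs \<and>
     (\<forall>i. i + 1 < length cs \<longrightarrow> {cs ! i, cs ! (i + 1)} \<in> E) \<and> {last cs, hd cs} \<in> E"

definition acyclic_graph :: "'a set set \<Rightarrow> bool" where
  "acyclic_graph E \<longleftrightarrow> \<not> (\<exists>cs. is_cycle E cs)"

definition spanning_tree :: "'a set \<Rightarrow> 'a set set \<Rightarrow> 'a set set \<Rightarrow> bool" where
  "spanning_tree V E T \<longleftrightarrow> T \<subseteq> E \<and> graph_connected V T \<and> acyclic_graph T"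

definition num_spanning_trees :: "'a set \<Rightarrow> 'a set set \<Rightarrow> nat" where
  "num_spanning_trees V E = card {T. spanning_tree V E T}"

text \<open>Moebius polyomino network M_n: vertex i is (i, False), vertex i' is (i, True).\<close>
definition mobius_verts :: "nat \<Rightarrow> (nat \<times> bool) set" where
  "mobius_verts n = {(i, b). 1 \<le> i \<and> i \<le> n}"

definition mobius_edges :: "nat \<Rightarrow> (nat \<times> bool) set set" where
  "mobius_edges n =
     {{(i, b), (i + 1, b)} | i b. 1 \<le> i \<and> i \<le> n - 1}
   \<union> {{(i, False), (i, True)} | i. 1 \<le> i \<and> i \<le> n}
   \<union> {{(1, False), (n, True)}, {(1, True), (n, False)}}"

end

theory Submission
  imports Defs
begin

(* Transfer-matrix method. Deleting the two twisted edges of M_n leaves the ladder with n rungs,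
   so a spanning tree of M_n is a forest F of the ladder in which every vertex is joined to one
   of the corners 1, 1', n, n', together with some twisted edges; whether the result is a
   spanning tree depends only on how F connects the corners. Attaching one more square to the
   ladder changes this partition of the corners by a fixed finite rule. Hence the number of ways
   to complete a forest after j further squares depends only on j and on the partition, and for
   each of the 15 partitions it has a closed form in j, x_j and y_j, where
   (2 + sqrt 3)^j = x_j + y_j sqrt 3, verified against the one-square rule by finite case
   analysis. The ladder with one rung has two such forests, and their completion counts after
   n - 1 squares add up to n (x_n + 1). *)

section \<open>Connectivity and cycles in edge sets\<close>

abbreviation conn :: "'a set set \<Rightarrow> 'a \<Rightarrow> 'a \<Rightarrow> bool" where
  "conn G \<equiv> (adj G)\<^sup>*\<^sup>*"

lemma conn_edge: "{u, v} \<in> G \<Longrightarrow> conn G u v"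
  by (simp add: adj_def r_into_rtranclp)

lemma conn_sym: "conn G u v \<Longrightarrow> conn G v u"
proof (induction rule: rtranclp_induct)
  case (step y z)
  then show ?case
    by (metis adj_def insert_commute converse_rtranclp_into_rtranclp)
qed simp

lemma conn_mono:
  assumes "G \<subseteq> H" "conn G u v"
  shows "conn H u v"
proof -
  have "adj G \<le> adj H" using assms(1) by (auto simp: adj_def)
  then show ?thesis using assms(2) rtranclp_mono by blast
qed

lemma conn_empty: "conn {} x y \<longleftrightarrow> x = y"
  by (auto simp: adj_def elim: converse_rtranclpE)

lemma conn_isolated: "\<forall>e\<in>G. x \<notin> e \<Longrightarrow> conn G x y \<Longrightarrow> y = x"
  by (erule converse_rtranclpE) (auto simp: adj_def)

lemma conn_insert:
  "conn (insert {u, v} G) x y \<longleftrightarrow>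
     conn G x y \<or> (conn G x u \<and> conn G v y) \<or> (conn G x v \<and> conn G u y)"
proof
  assume "conn (insert {u, v} G) x y"
  then show "conn G x y \<or> (conn G x u \<and> conn G v y) \<or> (conn G x v \<and> conn G u y)"
  proof (induction rule: rtranclp_induct)
    case (step y z)
    then have "{y, z} \<in> G \<or> (y = u \<and> z = v) \<or> (y = v \<and> z = u)"
      by (auto simp: adj_def doubleton_eq_iff)
    with step.IH show ?case
      by (meson conn_edge rtranclp_trans rtranclp.rtrancl_refl)
  qed simp
next
  have "conn (insert {u, v} G) u v" "conn (insert {u, v} G) v u"
    by (auto intro: conn_edge simp: insert_commute)
  moreover have "conn G a b \<Longrightarrow> conn (insert {u, v} G) a b" for a b
    by (rule conn_mono[of G]) auto
  moreover assume "conn G x y \<or> (conn G x u \<and> conn G v y) \<or> (conn G x v \<and> conn G u y)"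
  ultimately show "conn (insert {u, v} G) x y"
    by (meson rtranclp_trans)
qed

lemma conn_obtain_path:
  assumes "conn G u v"
  obtains ws where "ws \<noteq> []" "hd ws = u" "last ws = v" "distinct ws"
    "\<forall>i. i + 1 < length ws \<longrightarrow> {ws ! i, ws ! (i + 1)} \<in> G"
  using assms
proof (induction arbitrary: thesis rule: converse_rtranclp_induct)
  case base
  show ?case by (rule base[of "[v]"]) auto
next
  case (step u w)
  obtain ws where ws: "ws \<noteq> []" "hd ws = w" "last ws = v" "distinct ws"
    "\<forall>i. i + 1 < length ws \<longrightarrow> {ws ! i, ws ! (i + 1)} \<in> G"
    by (rule step.IH)
  have uw: "{u, w} \<in> G" using step.hyps(1) by (simp add: adj_def)
  show ?case
  proof (cases "u \<in> set ws")
    case False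
    show ?thesis
    proof (rule step.prems[of "u # ws"])
      show "\<forall>i. i + 1 < length (u # ws) \<longrightarrow> {(u # ws) ! i, (u # ws) ! (i + 1)} \<in> G"
        using ws uw by (auto simp: nth_Cons hd_conv_nth split: nat.split)
    qed (use ws False in auto)
  next
    case True
    then obtain i where i: "i < length ws" "ws ! i = u" by (auto simp: in_set_conv_nth)
    show ?thesis
    proof (rule step.prems[of "drop i ws"])
      show "\<forall>j. j + 1 < length (drop i ws) \<longrightarrow> {drop i ws ! j, drop i ws ! (j + 1)} \<in> G"
        using ws i by (simp add: add.assoc)
    qed (use ws i in \<open>auto simp: hd_drop_conv_nth\<close>)
  qed
qed

lemma conn_along_list:
  assumes "\<forall>j. a \<le> j \<and> j < b \<longrightarrow> {cs ! j, cs ! (j + 1)} \<in> G" "a \<le> b"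
  shows "conn G (cs ! a) (cs ! b)"
  using assms
proof (induction b)
  case (Suc b)
  show ?case
  proof (cases "a = Suc b")
    case False
    with Suc.prems have "conn G (cs ! a) (cs ! b)" "{cs ! b, cs ! Suc b} \<in> G"
      by (auto intro: Suc.IH)
    then show ?thesis by (meson conn_edge rtranclp_trans)
  qed simp
qed simp

lemma acyclic_graph_mono: "H \<subseteq> G \<Longrightarrow> acyclic_graph G \<Longrightarrow> acyclic_graph H"
  unfolding acyclic_graph_def is_cycle_def by blast

lemma acyclic_graph_empty: "acyclic_graph {}"
  unfolding acyclic_graph_def is_cycle_def by auto

lemma consecutive_pairs_inj:
  assumes "distinct cs" "i + 1 < length cs" "j + 1 < length cs"
    and "{cs ! j, cs ! (j + 1)} = {cs ! i, cs ! (i + 1)}"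
  shows "j = i"
  using assms nth_eq_iff_index_eq[OF assms(1)] by (auto simp: doubleton_eq_iff)

lemma consecutive_pair_neq_closing:
  assumes "distinct cs" "length cs \<ge> 3" "j + 1 < length cs"
  shows "{cs ! j, cs ! (j + 1)} \<noteq> {last cs, hd cs}"
proof -
  define l where "l = length cs - 1"
  have "cs \<noteq> []" using assms(2) by auto
  then have ends: "last cs = cs ! l" "hd cs = cs ! 0"
    unfolding l_def by (simp_all add: last_conv_nth hd_conv_nth)
  have idx: "j < length cs" "j + 1 < length cs" "0 < length cs" "l < length cs"
    "j \<noteq> l" "j + 1 \<noteq> l \<or> j \<noteq> 0"
    using assms(2,3) unfolding l_def by auto
  note inj = nth_eq_iff_index_eq[OF assms(1)]
  have "cs ! j \<noteq> cs ! l" "cs ! (j + 1) \<noteq> cs ! 0"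
    using inj[of j l] inj[of "j + 1" 0] idx by simp_all
  moreover have "cs ! j \<noteq> cs ! 0 \<or> cs ! (j + 1) \<noteq> cs ! l"
    using inj[of j 0] inj[of "j + 1" l] idx by auto
  ultimately show ?thesis unfolding ends by (auto simp: doubleton_eq_iff)
qed

lemma is_cycle_close_path:
  assumes "ws \<noteq> []" "hd ws = u" "last ws = v" "distinct ws"
    and "\<forall>i. i + 1 < length ws \<longrightarrow> {ws ! i, ws ! (i + 1)} \<in> G"
    and "u \<noteq> v" "{u, v} \<notin> G"
  shows "is_cycle (insert {u, v} G) ws"
proof -
  have "length ws \<ge> 3"
  proof (rule ccontr)
    assume "\<not> length ws \<ge> 3"
    moreover have "length ws \<noteq> 0" using assms(1) by simp
    ultimately have "length ws = 1 \<or> length ws = 2" by linarith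
    then obtain x y where "ws = [x] \<or> ws = [x, y]"
      by (auto simp: length_Suc_conv numeral_2_eq_2)
    then show False using assms(2-3,5-7) by (auto dest: spec[of _ 0])
  qed
  with assms show ?thesis
    unfolding is_cycle_def by (auto simp: insert_commute)
qed

lemma conn_of_cycle_through_edge:
  assumes cyc: "is_cycle (insert {u, v} G) cs" and not_cyc: "\<not> is_cycle G cs"
  shows "conn G u v"
proof -
  define m where "m = length cs"
  have m3: "m \<ge> 3" and dist: "distinct cs"
    and inner: "\<forall>i. i + 1 < m \<longrightarrow> {cs ! i, cs ! (i + 1)} \<in> insert {u, v} G"
    and closing: "{last cs, hd cs} \<in> insert {u, v} G"
    using cyc unfolding is_cycle_def m_def by auto
  have "cs \<noteq> []" using m3 unfolding m_def by auto
  then have ends: "hd cs = cs ! 0" "last cs = cs ! (m - 1)"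
    unfolding m_def by (simp_all add: hd_conv_nth last_conv_nth)
  have "\<exists>a b. {a, b} = {u, v} \<and> conn G a b"
  proof (cases "{last cs, hd cs} \<in> G")
    case False
    then have uv: "{u, v} = {cs ! (m - 1), cs ! 0}" using closing ends by auto
    have "\<forall>j. 0 \<le> j \<and> j < m - 1 \<longrightarrow> {cs ! j, cs ! (j + 1)} \<in> G"
      using inner consecutive_pair_neq_closing[OF dist m3[unfolded m_def]] uv ends
      unfolding m_def by auto
    then have "conn G (cs ! 0) (cs ! (m - 1))" by (rule conn_along_list) simp
    with uv show ?thesis by (metis insert_commute)
  next
    case True
    with not_cyc cyc obtain i where i: "i + 1 < m" "{cs ! i, cs ! (i + 1)} \<notin> G"
      unfolding is_cycle_def m_def by auto
    then have uv: "{cs ! i, cs ! (i + 1)} = {u, v}" using inner by auto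
    have others: "\<forall>j. j + 1 < m \<and> j \<noteq> i \<longrightarrow> {cs ! j, cs ! (j + 1)} \<in> G"
      using inner consecutive_pairs_inj[OF dist i(1)[unfolded m_def]] uv
      unfolding m_def by auto
    have "conn G (cs ! (i + 1)) (cs ! (m - 1))"
      by (rule conn_along_list) (use others i in auto)
    moreover have "conn G (cs ! (m - 1)) (cs ! 0)"
      using True ends by (metis conn_edge)
    moreover have "conn G (cs ! 0) (cs ! i)"
      by (rule conn_along_list) (use others i in auto)
    ultimately have "conn G (cs ! (i + 1)) (cs ! i)" by (meson rtranclp_trans)
    with uv show ?thesis by (metis insert_commute)
  qed
  then show ?thesis by (auto simp: doubleton_eq_iff intro: conn_sym)
qed

lemma acyclic_graph_insert:
  assumes "u \<noteq> v" "{u, v} \<notin> G"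
  shows "acyclic_graph (insert {u, v} G) \<longleftrightarrow> acyclic_graph G \<and> \<not> conn G u v"
proof
  assume acyc: "acyclic_graph (insert {u, v} G)"
  show "acyclic_graph G \<and> \<not> conn G u v"
  proof
    show "acyclic_graph G" using acyc by (rule acyclic_graph_mono[rotated]) blast
    show "\<not> conn G u v"
    proof
      assume "conn G u v"
      then obtain ws where "ws \<noteq> []" "hd ws = u" "last ws = v" "distinct ws"
        "\<forall>i. i + 1 < length ws \<longrightarrow> {ws ! i, ws ! (i + 1)} \<in> G"
        by (rule conn_obtain_path)
      then have "is_cycle (insert {u, v} G) ws"
        using assms by (rule is_cycle_close_path)
      with acyc show False unfolding acyclic_graph_def by blast
    qed
  qed
next
  assume "acyclic_graph G \<and> \<not> conn G u v"
  then show "acyclic_graph (insert {u, v} G)"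
    unfolding acyclic_graph_def by (meson conn_of_cycle_through_edge)
qed

definition insert_if :: "bool \<Rightarrow> 'a \<Rightarrow> 'a set \<Rightarrow> 'a set" where
  "insert_if b e G = (if b then insert e G else G)"

definition join :: "('p \<Rightarrow> 'p \<Rightarrow> bool) \<Rightarrow> 'p \<Rightarrow> 'p \<Rightarrow> 'p \<Rightarrow> 'p \<Rightarrow> bool" where
  "join R u v a b \<longleftrightarrow> R a b \<or> (R a u \<and> R v b) \<or> (R a v \<and> R u b)"

definition join_if :: "bool \<Rightarrow> 'p \<Rightarrow> 'p \<Rightarrow> ('p \<Rightarrow> 'p \<Rightarrow> bool) \<Rightarrow> 'p \<Rightarrow> 'p \<Rightarrow> bool" where
  "join_if b u v R = (if b then join R u v else R)"

lemma conn_insert_if: "conn (insert_if b {p, q} G) = join_if b p q (conn G)"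
  by (auto simp: insert_if_def join_if_def join_def conn_insert fun_eq_iff)

lemma acyclic_graph_insert_if:
  assumes "p \<noteq> q" "{p, q} \<notin> G"
  shows "acyclic_graph (insert_if b {p, q} G) \<longleftrightarrow> acyclic_graph G \<and> (b \<longrightarrow> \<not> conn G p q)"
  using acyclic_graph_insert[OF assms] unfolding insert_if_def by auto

lemma conn_insert_if_into:
  assumes "conn (insert_if b {p, q} G) w z" "z \<in> S" "p \<in> S" "q \<in> S"
  shows "\<exists>z'\<in>S. conn G w z'"
  using assms conn_insert[of p q G w z] unfolding insert_if_def by (cases b) auto

section \<open>Ladder forests seen from their corners\<close>

datatype port = PA | PB | PC | PD | PX | PY

text \<open>For the ladder with \<open>k\<close> rungs, \<open>A, B\<close> are the ends of the first rung, \<open>C, D\<close> those of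
  rung \<open>k\<close>, and \<open>X, Y\<close> those of rung \<open>k + 1\<close>, which the next square attaches.\<close>

fun port_vertex :: "nat \<Rightarrow> port \<Rightarrow> nat \<times> bool" where
  "port_vertex k PA = (1, False)"
| "port_vertex k PB = (1, True)"
| "port_vertex k PC = (k, False)"
| "port_vertex k PD = (k, True)"
| "port_vertex k PX = (Suc k, False)"
| "port_vertex k PY = (Suc k, True)"

definition corners :: "nat \<Rightarrow> (nat \<times> bool) set" where
  "corners k = port_vertex k ` {PA, PB, PC, PD}"

definition ladder_edges :: "nat \<Rightarrow> (nat \<times> bool) set set" where
  "ladder_edges k = {{(i, b), (i + 1, b)} | i b. 1 \<le> i \<and> i < k}
     \<union> {{(i, False), (i, True)} | i. 1 \<le> i \<and> i \<le> k}"

definition port_conn :: "nat \<Rightarrow> (nat \<times> bool) set set \<Rightarrow> port \<Rightarrow> port \<Rightarrow> bool" where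
  "port_conn k F a b \<longleftrightarrow> conn F (port_vertex k a) (port_vertex k b)"

definition reaches_corner :: "nat \<Rightarrow> (nat \<times> bool) set set \<Rightarrow> bool" where
  "reaches_corner k F \<longleftrightarrow> (\<forall>w\<in>mobius_verts k. \<exists>z\<in>corners k. conn F w z)"

definition good_forest :: "nat \<Rightarrow> (nat \<times> bool) set set \<Rightarrow> bool" where
  "good_forest k F \<longleftrightarrow> F \<subseteq> ladder_edges k \<and> acyclic_graph F \<and> reaches_corner k F"

definition port_equiv :: "(port \<Rightarrow> port \<Rightarrow> bool) \<Rightarrow> bool" where
  "port_equiv \<sigma> \<longleftrightarrow> equivp \<sigma> \<and> (\<forall>b. \<sigma> PX b \<longleftrightarrow> b = PX) \<and> (\<forall>b. \<sigma> PY b \<longleftrightarrow> b = PY)"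

lemma port_conn_insert_if:
  "port_conn k (insert_if b {port_vertex k u, port_vertex k v} G) = join_if b u v (port_conn k G)"
  by (simp add: port_conn_def conn_insert_if join_if_def join_def fun_eq_iff)

lemma ladder_edges_vertex: "e \<in> ladder_edges k \<Longrightarrow> x \<in> e \<Longrightarrow> 1 \<le> fst x \<and> fst x \<le> k"
  unfolding ladder_edges_def by auto

lemma notin_ladder_edges: "x \<in> e \<Longrightarrow> k < fst x \<Longrightarrow> e \<notin> ladder_edges k"
  using ladder_edges_vertex by fastforce

lemma conn_beyond_ladder:
  assumes "F \<subseteq> ladder_edges k" "k < fst x" "conn F x y"
  shows "y = x"
proof (rule conn_isolated[OF _ assms(3)])
  show "\<forall>e\<in>F. x \<notin> e" using assms(1,2) ladder_edges_vertex by fastforce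
qed

lemma port_equiv_port_conn:
  assumes "1 \<le> k" "F \<subseteq> ladder_edges k"
  shows "port_equiv (port_conn k F)"
proof -
  have "equivp (port_conn k F)"
  proof (rule equivpI)
    show "reflp (port_conn k F)" by (simp add: reflp_def port_conn_def)
    show "symp (port_conn k F)" unfolding symp_def port_conn_def by (blast intro: conn_sym)
    show "transp (port_conn k F)" unfolding transp_def port_conn_def by (blast intro: rtranclp_trans)
  qed
  moreover have "port_conn k F l b \<longleftrightarrow> b = l" if "l \<in> {PX, PY}" for l b
  proof
    assume "port_conn k F l b"
    moreover have "k < fst (port_vertex k l)" using that by auto
    ultimately have "port_vertex k b = port_vertex k l"
      using conn_beyond_ladder[OF assms(2)] unfolding port_conn_def by blast
    then show "b = l" using that assms(1) by (cases b) auto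
  qed (simp add: port_conn_def)
  ultimately show ?thesis unfolding port_equiv_def by auto
qed

lemma port_equiv_isolated:
  assumes "port_equiv \<sigma>" "a \<in> {PX, PY} \<or> b \<in> {PX, PY}"
  shows "\<sigma> a b \<longleftrightarrow> a = b"
  using assms equivp_symp[of \<sigma>] unfolding port_equiv_def by (metis insertE empty_iff)

lemma finite_mobius_verts: "finite (mobius_verts k)"
proof -
  have "mobius_verts k \<subseteq> {1..k} \<times> UNIV" unfolding mobius_verts_def by auto
  then show ?thesis by (rule finite_subset) simp
qed

lemma finite_ladder_edges: "finite (ladder_edges k)"
proof -
  have "ladder_edges k \<subseteq> Pow (mobius_verts k)"
    using ladder_edges_vertex unfolding mobius_verts_def by fastforce
  then show ?thesis using finite_mobius_verts by (simp add: finite_subset)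
qed

lemma finite_good_forests: "finite {F. good_forest k F}"
  by (rule finite_subset[of _ "Pow (ladder_edges k)"])
     (auto simp: good_forest_def finite_ladder_edges)

section \<open>Attaching a square\<close>

fun extend :: "nat \<Rightarrow> (nat \<times> bool) set set \<Rightarrow> bool \<times> bool \<times> bool \<Rightarrow> (nat \<times> bool) set set" where
  "extend k F (b1, b2, b3) =
     insert_if b3 {port_vertex k PX, port_vertex k PY}
       (insert_if b2 {port_vertex k PD, port_vertex k PY}
         (insert_if b1 {port_vertex k PC, port_vertex k PX} F))"

fun square_rel :: "(port \<Rightarrow> port \<Rightarrow> bool) \<Rightarrow> bool \<times> bool \<times> bool \<Rightarrow> port \<Rightarrow> port \<Rightarrow> bool" where
  "square_rel \<sigma> (b1, b2, b3) = join_if b3 PX PY (join_if b2 PD PY (join_if b1 PC PX \<sigma>))"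

text \<open>The new edges must not close a cycle, and \<open>C, D\<close>, which stop being corners, must still
  reach a corner of the longer ladder.\<close>

fun square_ok :: "(port \<Rightarrow> port \<Rightarrow> bool) \<Rightarrow> bool \<times> bool \<times> bool \<Rightarrow> bool" where
  "square_ok \<sigma> (b1, b2, b3) \<longleftrightarrow>
     (b1 \<longrightarrow> \<not> \<sigma> PC PX) \<and> (b2 \<longrightarrow> \<not> join_if b1 PC PX \<sigma> PD PY) \<and>
     (b3 \<longrightarrow> \<not> join_if b2 PD PY (join_if b1 PC PX \<sigma>) PX PY) \<and>
     (\<forall>l\<in>{PC, PD}. \<exists>t\<in>{PA, PB, PX, PY}. square_rel \<sigma> (b1, b2, b3) l t)"

fun shift_port :: "port \<Rightarrow> port" where
  "shift_port PC = PX"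
| "shift_port PD = PY"
| "shift_port a = a"

text \<open>Once the square is attached, \<open>X, Y\<close> are the corners \<open>C, D\<close> of the longer ladder, whose
  own \<open>X, Y\<close> are still isolated.\<close>

definition next_rel :: "(port \<Rightarrow> port \<Rightarrow> bool) \<Rightarrow> bool \<times> bool \<times> bool \<Rightarrow> port \<Rightarrow> port \<Rightarrow> bool" where
  "next_rel \<sigma> bs a b \<longleftrightarrow>
     (if a \<in> {PX, PY} \<or> b \<in> {PX, PY} then a = b
      else square_rel \<sigma> bs (shift_port a) (shift_port b))"

definition transfer :: "((port \<Rightarrow> port \<Rightarrow> bool) \<Rightarrow> real) \<Rightarrow> (port \<Rightarrow> port \<Rightarrow> bool) \<Rightarrow> real" where
  "transfer \<phi> \<sigma> = (\<Sum>bs\<in>UNIV. if square_ok \<sigma> bs then \<phi> (next_rel \<sigma> bs) else 0)"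

lemma port_vertex_Suc: "a \<in> {PA, PB, PC, PD} \<Longrightarrow> port_vertex (Suc k) a = port_vertex k (shift_port a)"
  by auto

lemma corners_Suc: "corners (Suc k) = port_vertex k ` {PA, PB, PX, PY}"
  by (auto simp: corners_def)

lemma mobius_verts_Suc:
  "mobius_verts (Suc k) = insert (port_vertex k PX) (insert (port_vertex k PY) (mobius_verts k))"
  unfolding mobius_verts_def by (auto simp: le_Suc_eq)

lemma ladder_edges_mono: "k \<le> k' \<Longrightarrow> ladder_edges k \<subseteq> ladder_edges k'"
  unfolding ladder_edges_def by (intro Un_mono) (auto intro: less_le_trans order_trans)

lemma ladder_edges_Suc:
  assumes "1 \<le> k"
  shows "ladder_edges (Suc k) =
    insert {port_vertex k PC, port_vertex k PX} (insert {port_vertex k PD, port_vertex k PY}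
      (insert {port_vertex k PX, port_vertex k PY} (ladder_edges k)))"
proof (intro equalityI subsetI)
  fix e assume "e \<in> ladder_edges (Suc k)"
  then consider (rail) i b where "e = {(i, b), (i + 1, b)}" "1 \<le> i" "i < Suc k"
    | (rung) i where "e = {(i, False), (i, True)}" "1 \<le> i" "i \<le> Suc k"
    unfolding ladder_edges_def by blast
  then show "e \<in> insert {port_vertex k PC, port_vertex k PX} (insert {port_vertex k PD, port_vertex k PY}
      (insert {port_vertex k PX, port_vertex k PY} (ladder_edges k)))"
  proof cases
    case rail
    show ?thesis
    proof (cases "i < k")
      case True
      then have "e \<in> ladder_edges k" using rail unfolding ladder_edges_def by blast
      then show ?thesis by blast
    next
      case False
      then have "i = k" using rail by simp
      then show ?thesis using rail by (cases b) auto
    qed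
  next
    case rung
    show ?thesis
    proof (cases "i \<le> k")
      case True
      then have "e \<in> ladder_edges k" using rung unfolding ladder_edges_def by blast
      then show ?thesis by blast
    next
      case False
      then have "i = Suc k" using rung by simp
      then show ?thesis using rung by simp
    qed
  qed
next
  have "ladder_edges k \<subseteq> ladder_edges (Suc k)" by (rule ladder_edges_mono) simp
  moreover have "{port_vertex k PC, port_vertex k PX} \<in> ladder_edges (Suc k)"
    "{port_vertex k PD, port_vertex k PY} \<in> ladder_edges (Suc k)"
    "{port_vertex k PX, port_vertex k PY} \<in> ladder_edges (Suc k)"
    using assms unfolding ladder_edges_def by auto
  moreover fix e assume "e \<in> insert {port_vertex k PC, port_vertex k PX} (insert {port_vertex k PD, port_vertex k PY}
      (insert {port_vertex k PX, port_vertex k PY} (ladder_edges k)))"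
  ultimately show "e \<in> ladder_edges (Suc k)" by blast
qed

lemma new_square_edges_notin:
  "{port_vertex k PC, port_vertex k PX} \<notin> ladder_edges k"
  "{port_vertex k PD, port_vertex k PY} \<notin> ladder_edges k"
  "{port_vertex k PX, port_vertex k PY} \<notin> ladder_edges k"
  using notin_ladder_edges[of "port_vertex k PX" _ k] notin_ladder_edges[of "port_vertex k PY" _ k]
  by auto

lemma extend_subset: "1 \<le> k \<Longrightarrow> F \<subseteq> ladder_edges k \<Longrightarrow> extend k F bs \<subseteq> ladder_edges (Suc k)"
  using ladder_edges_Suc[of k] by (cases bs) (auto simp: insert_if_def)

lemma subset_extend: "F \<subseteq> extend k F bs"
  by (cases bs) (auto simp: insert_if_def)

definition split_square :: "nat \<Rightarrow> (nat \<times> bool) set set \<Rightarrow> (nat \<times> bool) set set \<times> bool \<times> bool \<times> bool" where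
  "split_square k F' = (F' \<inter> ladder_edges k,
     {port_vertex k PC, port_vertex k PX} \<in> F', {port_vertex k PD, port_vertex k PY} \<in> F',
     {port_vertex k PX, port_vertex k PY} \<in> F')"

lemma split_square_extend:
  assumes "F \<subseteq> ladder_edges k"
  shows "split_square k (extend k F bs) = (F, bs)"
proof -
  obtain b1 b2 b3 where bs: "bs = (b1, b2, b3)" by (cases bs)
  note new = new_square_edges_notin[of k, simplified]
  have old: "{port_vertex k PC, port_vertex k PX} \<notin> F" "{port_vertex k PD, port_vertex k PY} \<notin> F"
    "{port_vertex k PX, port_vertex k PY} \<notin> F"
    using assms new_square_edges_notin[of k] by blast+
  have "extend k F bs \<inter> ladder_edges k = F"
    using assms by (simp add: bs insert_if_def new Int_insert_left Int_absorb2)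
  moreover have "{port_vertex k PC, port_vertex k PX} \<in> extend k F bs \<longleftrightarrow> b1"
    "{port_vertex k PD, port_vertex k PY} \<in> extend k F bs \<longleftrightarrow> b2"
    "{port_vertex k PX, port_vertex k PY} \<in> extend k F bs \<longleftrightarrow> b3"
    using old by (simp_all add: bs insert_if_def doubleton_eq_iff)
  ultimately show ?thesis using bs by (simp add: split_square_def)
qed

lemma extend_split_square:
  assumes "1 \<le> k" "F' \<subseteq> ladder_edges (Suc k)"
  shows "case_prod (extend k) (split_square k F') = F'"
  using assms ladder_edges_Suc[OF assms(1)] by (auto simp: split_square_def insert_if_def)

lemma port_conn_extend: "port_conn k (extend k F bs) = square_rel (port_conn k F) bs"
  by (cases bs) (simp only: extend.simps square_rel.simps port_conn_insert_if)

lemma acyclic_graph_extend: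
  assumes "F \<subseteq> ladder_edges k"
  shows "acyclic_graph (extend k F (b1, b2, b3)) \<longleftrightarrow> acyclic_graph F \<and> (b1 \<longrightarrow> \<not> port_conn k F PC PX) \<and>
     (b2 \<longrightarrow> \<not> join_if b1 PC PX (port_conn k F) PD PY) \<and>
     (b3 \<longrightarrow> \<not> join_if b2 PD PY (join_if b1 PC PX (port_conn k F)) PX PY)"
proof -
  define F1 where "F1 = insert_if b1 {port_vertex k PC, port_vertex k PX} F"
  define F2 where "F2 = insert_if b2 {port_vertex k PD, port_vertex k PY} F1"
  have new: "{port_vertex k PC, port_vertex k PX} \<notin> F" "{port_vertex k PD, port_vertex k PY} \<notin> F1"
    "{port_vertex k PX, port_vertex k PY} \<notin> F2"
    using assms new_square_edges_notin[of k] unfolding F2_def F1_def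
    by (auto simp: insert_if_def doubleton_eq_iff)
  have conn1: "port_conn k F1 = join_if b1 PC PX (port_conn k F)"
    unfolding F1_def by (rule port_conn_insert_if)
  have conn2: "port_conn k F2 = join_if b2 PD PY (join_if b1 PC PX (port_conn k F))"
    unfolding F2_def by (simp only: port_conn_insert_if conn1)
  have "acyclic_graph (extend k F (b1, b2, b3)) \<longleftrightarrow>
      acyclic_graph F2 \<and> (b3 \<longrightarrow> \<not> port_conn k F2 PX PY)"
    unfolding extend.simps F2_def[symmetric] F1_def[symmetric] port_conn_def
    by (rule acyclic_graph_insert_if[OF _ new(3)]) simp
  also have "acyclic_graph F2 \<longleftrightarrow> acyclic_graph F1 \<and> (b2 \<longrightarrow> \<not> port_conn k F1 PD PY)"
    unfolding F2_def port_conn_def by (rule acyclic_graph_insert_if[OF _ new(2)]) simp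
  also have "acyclic_graph F1 \<longleftrightarrow> acyclic_graph F \<and> (b1 \<longrightarrow> \<not> port_conn k F PC PX)"
    unfolding F1_def port_conn_def by (rule acyclic_graph_insert_if[OF _ new(1)]) simp
  finally show ?thesis unfolding conn1 conn2 by blast
qed

lemma conn_extend_into:
  assumes "conn (extend k F bs) w y" "y \<in> S" "port_vertex k ` {PC, PD, PX, PY} \<subseteq> S"
  shows "\<exists>z\<in>S. conn F w z"
proof -
  obtain b1 b2 b3 where bs: "bs = (b1, b2, b3)" by (cases bs)
  have S: "port_vertex k PC \<in> S" "port_vertex k PD \<in> S" "port_vertex k PX \<in> S" "port_vertex k PY \<in> S"
    using assms(3) by auto
  define F1 where "F1 = insert_if b1 {port_vertex k PC, port_vertex k PX} F"
  define F2 where "F2 = insert_if b2 {port_vertex k PD, port_vertex k PY} F1"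
  have "conn (insert_if b3 {port_vertex k PX, port_vertex k PY} F2) w y"
    using assms(1) by (simp only: bs F2_def F1_def extend.simps)
  then obtain z2 where "z2 \<in> S" "conn F2 w z2"
    using conn_insert_if_into[OF _ assms(2) S(3,4)] by blast
  then obtain z1 where "z1 \<in> S" "conn F1 w z1"
    using conn_insert_if_into[OF _ _ S(2,4)] unfolding F2_def by blast
  then show ?thesis
    using conn_insert_if_into[OF _ _ S(1,3)] unfolding F1_def by blast
qed

lemma reaches_corner_extend_imp:
  assumes "F \<subseteq> ladder_edges k" "reaches_corner (Suc k) (extend k F bs)"
  shows "reaches_corner k F"
  unfolding reaches_corner_def
proof
  fix w assume w: "w \<in> mobius_verts k"
  then obtain z where z: "z \<in> corners (Suc k)" "conn (extend k F bs) w z"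
    using assms(2) by (auto simp: reaches_corner_def mobius_verts_Suc)
  have "z \<in> range (port_vertex k)" using z(1) unfolding corners_Suc by blast
  then have "\<exists>z'\<in>range (port_vertex k). conn F w z'"
    by (rule conn_extend_into[OF z(2)]) blast
  then obtain l where l: "conn F w (port_vertex k l)" by blast
  have "fst w \<le> k" using w unfolding mobius_verts_def by auto
  then have "l \<notin> {PX, PY}"
    using conn_beyond_ladder[OF assms(1), of "port_vertex k l" w] conn_sym[OF l] by auto
  with l show "\<exists>z\<in>corners k. conn F w z"
    unfolding corners_def by (cases l) auto
qed

lemma reaches_corner_extend:
  assumes "1 \<le> k" "F \<subseteq> ladder_edges k"
  shows "reaches_corner (Suc k) (extend k F bs) \<longleftrightarrow> reaches_corner k F \<and>
     (\<forall>l\<in>{PC, PD}. \<exists>t\<in>{PA, PB, PX, PY}. square_rel (port_conn k F) bs l t)"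
proof -
  let ?F' = "extend k F bs"
  have square: "square_rel (port_conn k F) bs a b \<longleftrightarrow> conn ?F' (port_vertex k a) (port_vertex k b)" for a b
    by (simp add: port_conn_extend[symmetric] port_conn_def)
  have CD: "port_vertex k l \<in> mobius_verts (Suc k)" if "l \<in> {PC, PD}" for l
    using that assms(1) unfolding mobius_verts_def by auto
  show ?thesis
  proof
    assume R: "reaches_corner (Suc k) ?F'"
    have "\<exists>t\<in>{PA, PB, PX, PY}. square_rel (port_conn k F) bs l t" if "l \<in> {PC, PD}" for l
      using R CD[OF that] unfolding reaches_corner_def corners_Suc square by blast
    with reaches_corner_extend_imp[OF assms(2) R] show "reaches_corner k F \<and>
      (\<forall>l\<in>{PC, PD}. \<exists>t\<in>{PA, PB, PX, PY}. square_rel (port_conn k F) bs l t)" by blast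
  next
    assume R: "reaches_corner k F \<and> (\<forall>l\<in>{PC, PD}. \<exists>t\<in>{PA, PB, PX, PY}. square_rel (port_conn k F) bs l t)"
    have to_corner: "\<exists>z\<in>corners (Suc k). conn ?F' z' z" if z': "z' \<in> corners k" for z'
    proof -
      obtain l where l: "z' = port_vertex k l" "l \<in> {PA, PB, PC, PD}"
        using z' unfolding corners_def by (rule imageE)
      show ?thesis
      proof (cases "l \<in> {PC, PD}")
        case True
        with R obtain t where t: "t \<in> {PA, PB, PX, PY}" "square_rel (port_conn k F) bs l t"
          by blast
        then have "conn ?F' z' (port_vertex k t)" using square[of l t] l(1) by simp
        with t(1) show ?thesis unfolding corners_Suc by blast
      next
        case False
        then have "l \<in> {PA, PB}" using l(2) by blast
        then have "z' \<in> corners (Suc k)" using l(1) unfolding corners_Suc by blast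
        then show ?thesis by blast
      qed
    qed
    show "reaches_corner (Suc k) ?F'" unfolding reaches_corner_def
    proof
      fix w assume "w \<in> mobius_verts (Suc k)"
      then consider "w \<in> mobius_verts k" | "w \<in> corners (Suc k)"
        by (auto simp: mobius_verts_Suc corners_Suc)
      then show "\<exists>z\<in>corners (Suc k). conn ?F' w z"
      proof cases
        case 1
        then obtain z' where "z' \<in> corners k" "conn F w z'" using R unfolding reaches_corner_def by blast
        then show ?thesis
          using to_corner conn_mono[OF subset_extend] by (meson rtranclp_trans)
      qed blast
    qed
  qed
qed

lemma good_forest_extend:
  assumes "1 \<le> k" "F \<subseteq> ladder_edges k"
  shows "good_forest (Suc k) (extend k F bs) \<longleftrightarrow> good_forest k F \<and> square_ok (port_conn k F) bs"
proof -
  obtain b1 b2 b3 where bs: "bs = (b1, b2, b3)" by (cases bs)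
  show ?thesis
    using extend_subset[OF assms, of bs] reaches_corner_extend[OF assms, of bs]
      acyclic_graph_extend[OF assms(2), of b1 b2 b3] assms(2)
    unfolding good_forest_def bs square_ok.simps by argo
qed

lemma port_conn_Suc_extend:
  assumes "1 \<le> k" "F \<subseteq> ladder_edges k"
  shows "port_conn (Suc k) (extend k F bs) = next_rel (port_conn k F) bs"
proof (intro ext)
  fix a b
  have equiv: "port_equiv (port_conn (Suc k) (extend k F bs))"
    using port_equiv_port_conn[OF _ extend_subset[OF assms]] by simp
  show "port_conn (Suc k) (extend k F bs) a b = next_rel (port_conn k F) bs a b"
  proof (cases "a \<in> {PX, PY} \<or> b \<in> {PX, PY}")
    case True
    then show ?thesis using port_equiv_isolated[OF equiv True] unfolding next_rel_def by simp
  next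
    case False
    then have "a \<in> {PA, PB, PC, PD}" "b \<in> {PA, PB, PC, PD}" by (cases a; cases b; simp)+
    then show ?thesis using False
      by (simp add: next_rel_def port_conn_def port_vertex_Suc port_conn_extend[symmetric])
  qed
qed

lemma sum_decomposition:
  assumes "finite A" "\<And>a. a \<in> A \<Longrightarrow> finite (B a)"
    and "\<And>a b. a \<in> A \<Longrightarrow> b \<in> B a \<Longrightarrow> glue a b \<in> S \<and> split (glue a b) = (a, b)"
    and "\<And>s. s \<in> S \<Longrightarrow> split s \<in> Sigma A B \<and> case_prod glue (split s) = s"
  shows "(\<Sum>s\<in>S. f s) = (\<Sum>a\<in>A. \<Sum>b\<in>B a. f (glue a b))"
proof -
  have "(\<Sum>s\<in>S. f s) = (\<Sum>(a, b)\<in>Sigma A B. f (glue a b))"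
    by (rule sum.reindex_bij_witness[where i = "case_prod glue" and j = split]) (use assms in \<open>auto simp: split_def\<close>)
  also have "\<dots> = (\<Sum>a\<in>A. \<Sum>b\<in>B a. f (glue a b))"
    using assms(1,2) by (simp add: sum.Sigma)
  finally show ?thesis .
qed

lemma sum_good_forests_Suc:
  assumes "1 \<le> k"
  shows "(\<Sum>F | good_forest (Suc k) F. \<phi> (port_conn (Suc k) F)) =
         (\<Sum>F | good_forest k F. transfer \<phi> (port_conn k F))"
proof -
  have "(\<Sum>F | good_forest (Suc k) F. \<phi> (port_conn (Suc k) F)) =
      (\<Sum>F | good_forest k F. \<Sum>bs | square_ok (port_conn k F) bs. \<phi> (port_conn (Suc k) (extend k F bs)))"
  proof (rule sum_decomposition[where split = "split_square k"])
    fix F bs assume "F \<in> {F. good_forest k F}" "bs \<in> {bs. square_ok (port_conn k F) bs}"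
    then show "extend k F bs \<in> {F. good_forest (Suc k) F} \<and> split_square k (extend k F bs) = (F, bs)"
      using good_forest_extend[OF assms] split_square_extend by (auto simp: good_forest_def)
  next
    fix F' assume "F' \<in> {F. good_forest (Suc k) F}"
    then have "good_forest (Suc k) F'" "F' \<subseteq> ladder_edges (Suc k)" by (auto simp: good_forest_def)
    moreover have "fst (split_square k F') \<subseteq> ladder_edges k" by (simp add: split_square_def)
    ultimately show "split_square k F' \<in> Sigma {F. good_forest k F} (\<lambda>F. {bs. square_ok (port_conn k F) bs}) \<and>
        case_prod (extend k) (split_square k F') = F'"
      using good_forest_extend[OF assms] extend_split_square[OF assms]
      by (metis (mono_tags, lifting) SigmaI mem_Collect_eq prod.collapse case_prod_conv)
  qed (simp_all add: finite_good_forests)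
  also have "\<dots> = (\<Sum>F | good_forest k F. transfer \<phi> (port_conn k F))"
  proof (rule sum.cong[OF refl])
    fix F assume "F \<in> {F. good_forest k F}"
    then have "F \<subseteq> ladder_edges k" by (simp add: good_forest_def)
    then show "(\<Sum>bs | square_ok (port_conn k F) bs. \<phi> (port_conn (Suc k) (extend k F bs))) =
        transfer \<phi> (port_conn k F)"
      using sum.inter_filter[OF finite, of "\<lambda>bs. \<phi> (next_rel (port_conn k F) bs)" UNIV]
      by (simp add: transfer_def port_conn_Suc_extend[OF assms])
  qed
  finally show ?thesis .
qed

section \<open>Closing the twist\<close>

fun close_twist :: "nat \<Rightarrow> (nat \<times> bool) set set \<Rightarrow> bool \<times> bool \<Rightarrow> (nat \<times> bool) set set" where
  "close_twist n F (b1, b2) =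
     insert_if b2 {port_vertex n PB, port_vertex n PC} (insert_if b1 {port_vertex n PA, port_vertex n PD} F)"

fun closing_ok :: "(port \<Rightarrow> port \<Rightarrow> bool) \<Rightarrow> bool \<times> bool \<Rightarrow> bool" where
  "closing_ok \<sigma> (b1, b2) \<longleftrightarrow> (b1 \<longrightarrow> \<not> \<sigma> PA PD) \<and> (b2 \<longrightarrow> \<not> join_if b1 PA PD \<sigma> PB PC) \<and>
     (\<forall>l\<in>{PB, PC, PD}. join_if b2 PB PC (join_if b1 PA PD \<sigma>) PA l)"

definition closings :: "(port \<Rightarrow> port \<Rightarrow> bool) \<Rightarrow> real" where
  "closings \<sigma> = (\<Sum>bs\<in>UNIV. if closing_ok \<sigma> bs then 1 else 0)"

definition split_twist :: "nat \<Rightarrow> (nat \<times> bool) set set \<Rightarrow> (nat \<times> bool) set set \<times> bool \<times> bool" where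
  "split_twist n T = (T \<inter> ladder_edges n,
     {port_vertex n PA, port_vertex n PD} \<in> T, {port_vertex n PB, port_vertex n PC} \<in> T)"

lemma mobius_edges_ladder_edges:
  assumes "1 \<le> n"
  shows "mobius_edges n =
    insert {port_vertex n PA, port_vertex n PD} (insert {port_vertex n PB, port_vertex n PC} (ladder_edges n))"
proof -
  have "i \<le> n - 1 \<longleftrightarrow> i < n" if "1 \<le> i" for i using that assms by linarith
  then have rails: "{{(i, b), (i + 1, b)} | i b. 1 \<le> i \<and> i \<le> n - 1} =
      {{(i, b), (i + 1, b)} | i b. 1 \<le> i \<and> i < n}"
    by metis
  show ?thesis unfolding mobius_edges_def ladder_edges_def rails by simp
qed

lemma twist_edges_notin:
  assumes "3 \<le> n"
  shows "{port_vertex n PA, port_vertex n PD} \<notin> ladder_edges n"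
    "{port_vertex n PB, port_vertex n PC} \<notin> ladder_edges n"
  using assms unfolding ladder_edges_def by (auto simp: doubleton_eq_iff)

lemma split_twist_close_twist:
  assumes "3 \<le> n" "F \<subseteq> ladder_edges n"
  shows "split_twist n (close_twist n F bs) = (F, bs)"
proof -
  obtain b1 b2 where bs: "bs = (b1, b2)" by (cases bs)
  note new = twist_edges_notin[OF assms(1)]
  have old: "{port_vertex n PA, port_vertex n PD} \<notin> F" "{port_vertex n PB, port_vertex n PC} \<notin> F"
    using assms(2) new by blast+
  have "{port_vertex n PA, port_vertex n PD} \<noteq> {port_vertex n PB, port_vertex n PC}"
    using assms(1) by (auto simp: doubleton_eq_iff)
  then show ?thesis
    using assms(2) new old by (auto simp: bs split_twist_def insert_if_def)
qed

lemma close_twist_split_twist: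
  assumes "3 \<le> n" "T \<subseteq> mobius_edges n"
  shows "case_prod (close_twist n) (split_twist n T) = T"
  using assms mobius_edges_ladder_edges[of n] by (auto simp: split_twist_def insert_if_def)

lemma subset_close_twist: "F \<subseteq> close_twist n F bs"
  by (cases bs) (auto simp: insert_if_def)

lemma port_conn_close_twist:
  "port_conn n (close_twist n F (b1, b2)) = join_if b2 PB PC (join_if b1 PA PD (port_conn n F))"
  by (simp only: close_twist.simps port_conn_insert_if)

lemma acyclic_graph_close_twist:
  assumes "3 \<le> n" "F \<subseteq> ladder_edges n"
  shows "acyclic_graph (close_twist n F (b1, b2)) \<longleftrightarrow> acyclic_graph F \<and> (b1 \<longrightarrow> \<not> port_conn n F PA PD) \<and>
     (b2 \<longrightarrow> \<not> join_if b1 PA PD (port_conn n F) PB PC)"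
proof -
  define F1 where "F1 = insert_if b1 {port_vertex n PA, port_vertex n PD} F"
  have new: "{port_vertex n PA, port_vertex n PD} \<notin> F" "{port_vertex n PB, port_vertex n PC} \<notin> F1"
    using assms twist_edges_notin[OF assms(1)] unfolding F1_def
    by (auto simp: insert_if_def doubleton_eq_iff)
  have "acyclic_graph (close_twist n F (b1, b2)) \<longleftrightarrow>
      acyclic_graph F1 \<and> (b2 \<longrightarrow> \<not> port_conn n F1 PB PC)"
    unfolding close_twist.simps F1_def[symmetric] port_conn_def
    by (rule acyclic_graph_insert_if[OF _ new(2)]) simp
  also have "acyclic_graph F1 \<longleftrightarrow> acyclic_graph F \<and> (b1 \<longrightarrow> \<not> port_conn n F PA PD)"
    unfolding F1_def port_conn_def by (rule acyclic_graph_insert_if[OF _ new(1)]) (use assms(1) in simp)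
  finally show ?thesis unfolding F1_def port_conn_insert_if by blast
qed

lemma conn_close_twist_into:
  assumes "conn (close_twist n F bs) w y" "y \<in> corners n"
  shows "\<exists>z\<in>corners n. conn F w z"
proof -
  obtain b1 b2 where bs: "bs = (b1, b2)" by (cases bs)
  have S: "port_vertex n PA \<in> corners n" "port_vertex n PB \<in> corners n"
    "port_vertex n PC \<in> corners n" "port_vertex n PD \<in> corners n"
    unfolding corners_def by blast+
  define F1 where "F1 = insert_if b1 {port_vertex n PA, port_vertex n PD} F"
  have "conn (insert_if b2 {port_vertex n PB, port_vertex n PC} F1) w y"
    using assms(1) by (simp only: bs F1_def close_twist.simps)
  then obtain z1 where "z1 \<in> corners n" "conn F1 w z1"
    using conn_insert_if_into[OF _ assms(2) S(2,3)] by blast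
  then show ?thesis
    using conn_insert_if_into[OF _ _ S(1,4)] unfolding F1_def by blast
qed

lemma graph_connected_close_twist:
  assumes "3 \<le> n"
  shows "graph_connected (mobius_verts n) (close_twist n F bs) \<longleftrightarrow>
    reaches_corner n F \<and> (\<forall>l\<in>{PB, PC, PD}. port_conn n (close_twist n F bs) PA l)"
proof -
  let ?T = "close_twist n F bs"
  have corners: "corners n \<subseteq> mobius_verts n"
    using assms unfolding corners_def mobius_verts_def by auto
  then have A: "port_vertex n PA \<in> mobius_verts n" unfolding corners_def by blast
  show ?thesis
  proof
    assume C: "graph_connected (mobius_verts n) ?T"
    have "\<exists>z\<in>corners n. conn F w z" if w: "w \<in> mobius_verts n" for w
    proof (rule conn_close_twist_into)
      show "conn ?T w (port_vertex n PA)" using C w A unfolding graph_connected_def by blast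
    qed (simp add: corners_def)
    moreover have "port_conn n ?T PA l" if "l \<in> {PB, PC, PD}" for l
      using C A corners that unfolding graph_connected_def port_conn_def corners_def by blast
    ultimately show "reaches_corner n F \<and> (\<forall>l\<in>{PB, PC, PD}. port_conn n ?T PA l)"
      unfolding reaches_corner_def by blast
  next
    assume R: "reaches_corner n F \<and> (\<forall>l\<in>{PB, PC, PD}. port_conn n ?T PA l)"
    have corner_A: "conn ?T z (port_vertex n PA)" if z: "z \<in> corners n" for z
    proof -
      obtain l where l: "z = port_vertex n l" "l \<in> {PA, PB, PC, PD}"
        using z unfolding corners_def by (rule imageE)
      show ?thesis
      proof (cases "l = PA")
        case False
        with l R have "conn ?T (port_vertex n PA) z" unfolding port_conn_def by blast
        then show ?thesis by (rule conn_sym)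
      qed (simp add: l(1))
    qed
    have to_A: "conn ?T w (port_vertex n PA)" if w: "w \<in> mobius_verts n" for w
    proof -
      obtain z where "z \<in> corners n" "conn F w z" using R w unfolding reaches_corner_def by blast
      then show ?thesis
        using corner_A conn_mono[OF subset_close_twist] by (meson rtranclp_trans)
    qed
    show "graph_connected (mobius_verts n) ?T"
      unfolding graph_connected_def
      using rtranclp_trans[OF to_A conn_sym[OF to_A]] by blast
  qed
qed

lemma spanning_tree_close_twist:
  assumes "3 \<le> n" "F \<subseteq> ladder_edges n"
  shows "spanning_tree (mobius_verts n) (mobius_edges n) (close_twist n F bs) \<longleftrightarrow>
    good_forest n F \<and> closing_ok (port_conn n F) bs"
proof -
  obtain b1 b2 where bs: "bs = (b1, b2)" by (cases bs)
  have "close_twist n F bs \<subseteq> mobius_edges n"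
    using assms mobius_edges_ladder_edges[of n] by (auto simp: bs insert_if_def)
  then show ?thesis
    using graph_connected_close_twist[OF assms(1), of F bs] acyclic_graph_close_twist[OF assms, of b1 b2]
      port_conn_close_twist[of n F b1 b2] assms(2)
    unfolding spanning_tree_def good_forest_def bs closing_ok.simps by argo
qed

lemma num_spanning_trees_eq_sum_closings:
  assumes "3 \<le> n"
  shows "real (num_spanning_trees (mobius_verts n) (mobius_edges n)) =
    (\<Sum>F | good_forest n F. closings (port_conn n F))"
proof -
  let ?ST = "{T. spanning_tree (mobius_verts n) (mobius_edges n) T}"
  have "real (card ?ST) = (\<Sum>T\<in>?ST. 1)" by simp
  also have "\<dots> = (\<Sum>F | good_forest n F. \<Sum>bs | closing_ok (port_conn n F) bs. 1)"
  proof (rule sum_decomposition[where split = "split_twist n"])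
    fix F bs assume "F \<in> {F. good_forest n F}" "bs \<in> {bs. closing_ok (port_conn n F) bs}"
    then show "close_twist n F bs \<in> ?ST \<and> split_twist n (close_twist n F bs) = (F, bs)"
      using spanning_tree_close_twist[OF assms] split_twist_close_twist[OF assms]
      by (auto simp: good_forest_def)
  next
    fix T assume "T \<in> ?ST"
    then have "spanning_tree (mobius_verts n) (mobius_edges n) T" "T \<subseteq> mobius_edges n"
      by (auto simp: spanning_tree_def)
    moreover have "fst (split_twist n T) \<subseteq> ladder_edges n" by (simp add: split_twist_def)
    ultimately show "split_twist n T \<in> Sigma {F. good_forest n F} (\<lambda>F. {bs. closing_ok (port_conn n F) bs}) \<and>
        case_prod (close_twist n) (split_twist n T) = T"
      using spanning_tree_close_twist[OF assms] close_twist_split_twist[OF assms]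
      by (metis (mono_tags, lifting) SigmaI mem_Collect_eq prod.collapse case_prod_conv)
  qed (simp_all add: finite_good_forests)
  also have "\<dots> = (\<Sum>F | good_forest n F. closings (port_conn n F))"
  proof (rule sum.cong[OF refl])
    fix F
    show "(\<Sum>bs | closing_ok (port_conn n F) bs. 1) = closings (port_conn n F)"
      using sum.inter_filter[OF finite, of "\<lambda>_. 1 :: real" UNIV "closing_ok (port_conn n F)"]
      by (simp add: closings_def)
  qed
  finally show ?thesis unfolding num_spanning_trees_def .
qed

section \<open>Counting completions\<close>

definition pell_x :: "nat \<Rightarrow> real" where
  "pell_x j = ((2 + sqrt 3) ^ j + (2 - sqrt 3) ^ j) / 2"

definition pell_y :: "nat \<Rightarrow> real" where
  "pell_y j = ((2 + sqrt 3) ^ j - (2 - sqrt 3) ^ j) / (2 * sqrt 3)"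

lemma pell_x_0 [simp]: "pell_x 0 = 1"
  by (simp add: pell_x_def)

lemma pell_y_0 [simp]: "pell_y 0 = 0"
  by (simp add: pell_y_def)

lemma pell_x_Suc: "pell_x (Suc j) = 2 * pell_x j + 3 * pell_y j"
  and pell_y_Suc: "pell_y (Suc j) = pell_x j + 2 * pell_y j"
proof -
  have s: "sqrt 3 * sqrt 3 = (3::real)" "sqrt 3 * (sqrt 3 * x) = 3 * x" for x :: real
    by (simp_all flip: mult.assoc)
  show "pell_x (Suc j) = 2 * pell_x j + 3 * pell_y j"
    unfolding pell_x_def pell_y_def by (simp add: field_simps s)
  show "pell_y (Suc j) = pell_x j + 2 * pell_y j"
    unfolding pell_x_def pell_y_def by (simp add: field_simps s)
qed

definition port_rel :: "bool \<Rightarrow> bool \<Rightarrow> bool \<Rightarrow> bool \<Rightarrow> bool \<Rightarrow> bool \<Rightarrow> port \<Rightarrow> port \<Rightarrow> bool" where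
  "port_rel ab ac ad bc bd cd a b \<longleftrightarrow> a = b \<or>
     (ab \<and> {a, b} = {PA, PB}) \<or> (ac \<and> {a, b} = {PA, PC}) \<or> (ad \<and> {a, b} = {PA, PD}) \<or>
     (bc \<and> {a, b} = {PB, PC}) \<or> (bd \<and> {a, b} = {PB, PD}) \<or> (cd \<and> {a, b} = {PC, PD})"

definition corners_transitive :: "bool \<Rightarrow> bool \<Rightarrow> bool \<Rightarrow> bool \<Rightarrow> bool \<Rightarrow> bool \<Rightarrow> bool" where
  "corners_transitive ab ac ad bc bd cd \<longleftrightarrow>
     (ab \<and> bc \<longrightarrow> ac) \<and> (ab \<and> bd \<longrightarrow> ad) \<and> (ac \<and> bc \<longrightarrow> ab) \<and> (ac \<and> cd \<longrightarrow> ad) \<and>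
     (ad \<and> bd \<longrightarrow> ab) \<and> (ad \<and> cd \<longrightarrow> ac) \<and> (ab \<and> ac \<longrightarrow> bc) \<and> (ab \<and> ad \<longrightarrow> bd) \<and>
     (bc \<and> cd \<longrightarrow> bd) \<and> (bd \<and> cd \<longrightarrow> bc) \<and> (ac \<and> ad \<longrightarrow> cd) \<and> (bc \<and> bd \<longrightarrow> cd)"

lemma port_equiv_port_rel:
  assumes "port_equiv \<sigma>"
  shows "\<sigma> = port_rel (\<sigma> PA PB) (\<sigma> PA PC) (\<sigma> PA PD) (\<sigma> PB PC) (\<sigma> PB PD) (\<sigma> PC PD)"
    and "corners_transitive (\<sigma> PA PB) (\<sigma> PA PC) (\<sigma> PA PD) (\<sigma> PB PC) (\<sigma> PB PD) (\<sigma> PC PD)"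
proof -
  have eq: "equivp \<sigma>" using assms by (simp add: port_equiv_def)
  have sym: "\<sigma> b a \<longleftrightarrow> \<sigma> a b" for a b using equivp_symp[OF eq] by blast
  note refl = equivp_reflp[OF eq] and isolated = port_equiv_isolated[OF assms]
  show "\<sigma> = port_rel (\<sigma> PA PB) (\<sigma> PA PC) (\<sigma> PA PD) (\<sigma> PB PC) (\<sigma> PB PD) (\<sigma> PC PD)"
  proof (intro ext)
    fix a b
    show "\<sigma> a b = port_rel (\<sigma> PA PB) (\<sigma> PA PC) (\<sigma> PA PD) (\<sigma> PB PC) (\<sigma> PB PD) (\<sigma> PC PD) a b"
      by (cases a; cases b) (simp_all add: port_rel_def doubleton_eq_iff refl isolated
          sym[of PA PB] sym[of PA PC] sym[of PA PD] sym[of PB PC] sym[of PB PD] sym[of PC PD])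
  qed
  show "corners_transitive (\<sigma> PA PB) (\<sigma> PA PC) (\<sigma> PA PD) (\<sigma> PB PC) (\<sigma> PB PD) (\<sigma> PC PD)"
    unfolding corners_transitive_def using equivp_transp[OF eq] sym by meson
qed

text \<open>\<open>completions j \<sigma>\<close> is the number of ways to attach \<open>j\<close> further squares and then twisted
  edges to a good forest with port relation \<open>\<sigma>\<close> so that a spanning tree results, i.e. the
  solution of \<open>transfer (completions j) = completions (j + 1)\<close> with \<open>completions 0 = closings\<close>.
  It depends only on which of the pairs \<open>AB, AC, AD, BC, BD, CD\<close> are connected; the table
  lists the 15 partitions of the corners, and the default 0 is never used.\<close>

definition completion_count :: "nat \<Rightarrow> bool \<times> bool \<times> bool \<times> bool \<times> bool \<times> bool \<Rightarrow> real" where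
  "completion_count j pairs = (let x = pell_x j; y = pell_y j; m = real j in case pairs of
     (False, False, False, False, False, False) \<Rightarrow> y
   | (False, False, False, False, False, True) \<Rightarrow> x + y
   | (True, False, False, False, False, False) \<Rightarrow> x + y
   | (False, False, False, False, True, False) \<Rightarrow> (1 + x + m * y) / 2 + y
   | (False, True, False, False, False, False) \<Rightarrow> (1 + x + m * y) / 2 + y
   | (False, False, False, True, False, False) \<Rightarrow> (x - 1 + m * y) / 2 + y
   | (False, False, True, False, False, False) \<Rightarrow> (x - 1 + m * y) / 2 + y
   | (False, False, True, True, False, False) \<Rightarrow> (m + 1) * (x + y - 1)
   | (False, True, False, False, True, False) \<Rightarrow> (m + 1) * (x + y + 1)
   | (True, False, False, False, False, True) \<Rightarrow> 2 * x + 4 * y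
   | (False, False, False, True, True, True) \<Rightarrow> (2 * x + 3 * y + m * (x + y)) / 2
   | (False, True, True, False, False, True) \<Rightarrow> (2 * x + 3 * y + m * (x + y)) / 2
   | (True, False, True, False, True, False) \<Rightarrow> (2 * x + 3 * y + m * (x + y)) / 2
   | (True, True, False, True, False, False) \<Rightarrow> (2 * x + 3 * y + m * (x + y)) / 2
   | (True, True, True, True, True, True) \<Rightarrow> (m + 1) * (x + 2 * y)
   | _ \<Rightarrow> 0)"

definition completions :: "nat \<Rightarrow> (port \<Rightarrow> port \<Rightarrow> bool) \<Rightarrow> real" where
  "completions j \<sigma> = completion_count j (\<sigma> PA PB, \<sigma> PA PC, \<sigma> PA PD, \<sigma> PB PC, \<sigma> PB PD, \<sigma> PC PD)"

lemma sum_UNIV_prod: "(\<Sum>p\<in>UNIV. f p) = (\<Sum>a\<in>UNIV. \<Sum>b\<in>UNIV. f (a, b))"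
  for f :: "'a :: finite \<times> 'b :: finite \<Rightarrow> 'c :: comm_monoid_add"
  by (simp add: sum.cartesian_product flip: UNIV_Times_UNIV)

lemma transfer_completions:
  assumes "port_equiv \<sigma>"
  shows "transfer (completions j) \<sigma> = completions (Suc j) \<sigma>"
proof -
  have "transfer (completions j) (port_rel ab ac ad bc bd cd) = completions (Suc j) (port_rel ab ac ad bc bd cd)"
    if "corners_transitive ab ac ad bc bd cd" for ab ac ad bc bd cd
    using that unfolding transfer_def completions_def sum_UNIV_prod
    by (cases ab; cases ac; cases ad; cases bc; cases bd; cases cd)
       (simp_all add: UNIV_bool corners_transitive_def port_rel_def doubleton_eq_iff next_rel_def
         join_if_def join_def completion_count_def Let_def pell_x_Suc pell_y_Suc field_simps)
  then show ?thesis using port_equiv_port_rel[OF assms] by metis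
qed

lemma closings_eq_completions:
  assumes "port_equiv \<sigma>"
  shows "closings \<sigma> = completions 0 \<sigma>"
proof -
  have "closings (port_rel ab ac ad bc bd cd) = completions 0 (port_rel ab ac ad bc bd cd)"
    if "corners_transitive ab ac ad bc bd cd" for ab ac ad bc bd cd
    using that unfolding closings_def completions_def sum_UNIV_prod
    by (cases ab; cases ac; cases ad; cases bc; cases bd; cases cd)
       (simp_all add: UNIV_bool corners_transitive_def port_rel_def doubleton_eq_iff join_if_def join_def
         completion_count_def)
  then show ?thesis using port_equiv_port_rel[OF assms] by metis
qed

lemma good_forests_one: "{F. good_forest 1 F} = {{}, {{(1, False), (1, True)}}}"
proof -
  have rung: "ladder_edges 1 = {{(1, False), (1, True)}}"
    by (auto simp: ladder_edges_def)
  have "mobius_verts 1 \<subseteq> corners 1"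
  proof
    fix w assume "w \<in> mobius_verts 1"
    then have "w = port_vertex 1 PA \<or> w = port_vertex 1 PB"
      unfolding mobius_verts_def by (cases w; cases "snd w") auto
    then show "w \<in> corners 1" unfolding corners_def by blast
  qed
  then have "reaches_corner 1 F" for F
    unfolding reaches_corner_def by (blast intro: rtranclp.rtrancl_refl)
  moreover have "acyclic_graph {{(1::nat, False), (1::nat, True)}}"
    using acyclic_graph_insert[of "(1::nat, False)" "(1, True)" "{}"]
    by (simp add: acyclic_graph_empty conn_empty)
  ultimately show ?thesis
    unfolding good_forest_def rung using acyclic_graph_empty by (auto simp: subset_singleton_iff)
qed

lemma sum_good_forests_completions:
  assumes "1 \<le> k"
  shows "(\<Sum>F | good_forest k F. completions j (port_conn k F)) =
    (\<Sum>F | good_forest 1 F. completions (j + k - 1) (port_conn 1 F))"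
  using assms
proof (induction k arbitrary: j rule: nat_induct_at_least)
  case (Suc k)
  have "(\<Sum>F | good_forest (Suc k) F. completions j (port_conn (Suc k) F)) =
      (\<Sum>F | good_forest k F. transfer (completions j) (port_conn k F))"
    by (rule sum_good_forests_Suc[OF Suc.hyps])
  also have "\<dots> = (\<Sum>F | good_forest k F. completions (Suc j) (port_conn k F))"
    using port_equiv_port_conn[OF Suc.hyps] transfer_completions
    by (intro sum.cong) (auto simp: good_forest_def)
  also have "\<dots> = (\<Sum>F | good_forest 1 F. completions (j + Suc k - 1) (port_conn 1 F))"
    using Suc.IH[of "Suc j"] Suc.hyps by simp
  finally show ?case .
qed simp

lemma completions_one:
  "completions j (port_conn 1 {}) + completions j (port_conn 1 {{(1, False), (1, True)}}) =
    (real j + 1) * (pell_x (Suc j) + 1)"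
proof -
  have "completions j (port_conn 1 {}) = (real j + 1) * (pell_x j + pell_y j + 1)"
    by (simp add: completions_def port_conn_def conn_empty completion_count_def)
  moreover have "completions j (port_conn 1 {{(1, False), (1, True)}}) = (real j + 1) * (pell_x j + 2 * pell_y j)"
    by (simp add: completions_def port_conn_def conn_insert conn_empty completion_count_def)
  ultimately show ?thesis by (simp add: pell_x_Suc algebra_simps)
qed

theorem theorem3p4:
  fixes n :: nat
  assumes "n \<ge> 3"
  shows "real (num_spanning_trees (mobius_verts n) (mobius_edges n))
         = real n / 2 * ((2 + sqrt 3) ^ n + (2 - sqrt 3) ^ n + 2)"
proof -
  have n: "1 \<le> n" using assms by simp
  have "real (num_spanning_trees (mobius_verts n) (mobius_edges n)) =
      (\<Sum>F | good_forest n F. closings (port_conn n F))"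
    by (rule num_spanning_trees_eq_sum_closings[OF assms])
  also have "\<dots> = (\<Sum>F | good_forest n F. completions 0 (port_conn n F))"
    using port_equiv_port_conn[OF n] closings_eq_completions
    by (intro sum.cong) (auto simp: good_forest_def)
  also have "\<dots> = completions (n - 1) (port_conn 1 {}) +
      completions (n - 1) (port_conn 1 {{(1, False), (1, True)}})"
    using sum_good_forests_completions[OF n, of 0] unfolding good_forests_one by simp
  also have "\<dots> = real n * (pell_x n + 1)"
    using n completions_one[of "n - 1"] by (simp add: of_nat_diff)
  also have "\<dots> = real n / 2 * ((2 + sqrt 3) ^ n + (2 - sqrt 3) ^ n + 2)"
    by (simp add: pell_x_def field_simps)
  finally show ?thesis .
qed

end
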